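(* Let $\zeta: \mathrm{TVB}_2 \to \mathrm{GL}_3(\mathbb{C})$ be a complex homogeneous local representation of $\mathrm{TVB}_2$. Then $\zeta$ is equivalent to one of the following eight representations (for a $2\times 2$ matrix $M$ write $M\oplus 1=\begin{pmatrix} M & 0\\ 0 & 1\end{pmatrix}$ and $1\oplus M=\begin{pmatrix} 1 & 0\\ 0 & M\end{pmatrix}$): \begin{itemize} \item[(1)] $\zeta_1(\sigma_1)=\begin{pmatrix} d & b\\ b/x^2 & d\end{pmatrix}\oplus 1$, $\zeta_1(\rho_1)=\begin{pmatrix} 0 & x\\ 1/x & 0\end{pmatrix}\oplus 1$, $\zeta_1(\gamma_1)=\mathrm{diag}(-1,1,1)$, $\zeta_1(\gamma_2)=\mathrm{diag}(1,-1,1)$, where $b,d,x\in\mathbb{C}$, $b^2-d^2x^2\neq 0$, $x\neq 0$. \item[(2)] $\zeta_2(\sigma_1)=\begin{pmatrix} \frac{2bw+dx}{x} & b\\ \frac{b-bw^2}{x^2} & d\end{pmatrix}\oplus 1$, $\zeta_2(\rho_1)=\begin{pmatrix} w & x\\ \frac{1-w^2}{x} & -w\end{pmatrix}\oplus 1$, $\zeta_2(\gamma_1)=\zeta_2(\gamma_2)=I_3$, where $b,d,w,x\in\mathbb{C}$, $x\neq 0$, $dx+bw\neq b$ and $dx+bw\neq -b$. \item[(3)] $\zeta_3(\sigma_1)=\begin{pmatrix} a & b\\ c & d\end{pmatrix}\oplus 1$, $\zeta_3(\rho_1)=\mathrm{diag}(-1,-1,1)$, $\zeta_3(\gamma_1)=\zeta_3(\gamma_2)=I_3$,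 where $a,b,c,d\in\mathbb{C}$, $ad-bc\neq 0$. \item[(4)] $\zeta_4(\sigma_1)=\begin{pmatrix} a & b\\ c & d\end{pmatrix}\oplus 1$, $\zeta_4(\rho_1)=I_3$, $\zeta_4(\gamma_1)=\zeta_4(\gamma_2)=I_3$, where $a,b,c,d\in\mathbb{C}$, $ad-bc\neq 0$. \item[(5)] $\zeta_5(\sigma_1)=\begin{pmatrix} a & 0\\ c & d\end{pmatrix}\oplus 1$, $\zeta_5(\rho_1)=\begin{pmatrix} -1 & 0\\ \frac{2c}{d-a} & 1\end{pmatrix}\oplus 1$, $\zeta_5(\gamma_1)=\zeta_5(\gamma_2)=I_3$, where $a,c,d\in\mathbb{C}$, $ad\neq 0$, $a\neq d$. \item[(6)] $\zeta_6(\sigma_1)=\begin{pmatrix} a & 0\\ c & d\end{pmatrix}\oplus 1$, $\zeta_6(\rho_1)=\begin{pmatrix} 1 & 0\\ \frac{2c}{a-d} & -1\end{pmatrix}\oplus 1$, $\zeta_6(\gamma_1)=\zeta_6(\gamma_2)=I_3$, where $a,c,d\in\mathbb{C}$, $ad\neq 0$, $a\neq d$. \item[(7)] $\zeta_7(\sigma_1)=\mathrm{diag}(d,d,1)$, $\zeta_7(\rho_1)=\begin{pmatrix} 1 & 0\\ y & -1\end{pmatrix}\oplus 1$, $\zeta_7(\gamma_1)=\zeta_7(\gamma_2)=I_3$, where $d,y\in\mathbb{C}$, $d\neq 0$. \item[(8)] $\zeta_8(\sigma_1)=\mathrm{diag}(d,d,1)$, $\zeta_8(\rho_1)=\begin{pmatrix}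 -1 & 0\\ y & 1\end{pmatrix}\oplus 1$, $\zeta_8(\gamma_1)=\zeta_8(\gamma_2)=I_3$, where $d,y\in\mathbb{C}$, $d\neq 0$. \end{itemize}
   Context: The twisted virtual braid group $\mathrm{TVB}_2$ is the group with generators $\sigma_1,\rho_1,\gamma_1,\gamma_2$ and defining relations $\rho_1^2=1$, $\gamma_1^2=\gamma_2^2=1$, $\gamma_1\gamma_2=\gamma_2\gamma_1$, $\rho_1\gamma_1=\gamma_2\rho_1$, $\rho_1\sigma_1\rho_1=\gamma_2\gamma_1\sigma_1\gamma_1\gamma_2$. A complex local representation $\zeta:\mathrm{TVB}_2\to \mathrm{GL}_3(\mathbb{C})$ is a group homomorphism of the form $\zeta(\sigma_1)=S\oplus 1$, $\zeta(\rho_1)=R\oplus 1$, $\zeta(\gamma_1)=G_1\oplus 1$, $\zeta(\gamma_2)=1\oplus G_2$ with $S,R,G_1,G_2\in \mathrm{GL}_2(\mathbb{C})$, where $M\oplus 1$ is the block-diagonal matrix with blocks $M$ and $1$ and $1\oplus M$ the block-diagonal matrix with blocks $1$ and $M$. It is homogeneous if $G_1=G_2$. Two representations are equivalent if they are conjugate by a fixed invertible matrix. *)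

theory Defs
  imports "HOL-Analysis.Analysis"
begin

definition mat2 :: "complex \<Rightarrow> complex \<Rightarrow> complex \<Rightarrow> complex \<Rightarrow> complex^2^2" where
  "mat2 a b c d = vector [vector [a, b], vector [c, d]]"

definition mat3 :: "complex \<Rightarrow> complex \<Rightarrow> complex \<Rightarrow> complex \<Rightarrow> complex \<Rightarrow> complex
    \<Rightarrow> complex \<Rightarrow> complex \<Rightarrow> complex \<Rightarrow> complex^3^3" where
  "mat3 a11 a12 a13 a21 a22 a23 a31 a32 a33 =
     vector [vector [a11, a12, a13], vector [a21, a22, a23], vector [a31, a32, a33]]"

definition dsum_l :: "complex^2^2 \<Rightarrow> complex^3^3" where
  "dsum_l M = mat3 (M$1$1) (M$1$2) 0  (M$2$1) (M$2$2) 0  0 0 1"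

definition dsum_r :: "complex^2^2 \<Rightarrow> complex^3^3" where
  "dsum_r M = mat3 1 0 0  0 (M$1$1) (M$1$2)  0 (M$2$1) (M$2$2)"

definition diag3 :: "complex \<Rightarrow> complex \<Rightarrow> complex \<Rightarrow> complex^3^3" where
  "diag3 a b c = mat3 a 0 0  0 b 0  0 0 c"

text \<open>A representation of TVB_2 into GL_3(C) is given by the images of the generators
  (sigma_1, rho_1, gamma_1, gamma_2); a homomorphism out of the presented group TVB_2
  is exactly a choice of invertible images satisfying the defining relations.\<close>
type_synonym rep3 = "(complex^3^3) \<times> (complex^3^3) \<times> (complex^3^3) \<times> (complex^3^3)"

fun TVB2_relations :: "rep3 \<Rightarrow> bool" where
  "TVB2_relations (Zs, Zr, Zg1, Zg2) = (
      invertible Zs \<and> invertible Zr \<and> invertible Zg1 \<and> invertible Zg2 \<and>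
      Zr ** Zr = mat 1 \<and>
      Zg1 ** Zg1 = mat 1 \<and> Zg2 ** Zg2 = mat 1 \<and>
      Zg1 ** Zg2 = Zg2 ** Zg1 \<and>
      Zr ** Zg1 = Zg2 ** Zr \<and>
      Zr ** Zs ** Zr = Zg2 ** Zg1 ** Zs ** Zg1 ** Zg2)"

definition local_rep :: "complex^2^2 \<Rightarrow> complex^2^2 \<Rightarrow> complex^2^2 \<Rightarrow> complex^2^2 \<Rightarrow> rep3" where
  "local_rep S R G1 G2 = (dsum_l S, dsum_l R, dsum_l G1, dsum_r G2)"

definition is_local_rep :: "complex^2^2 \<Rightarrow> complex^2^2 \<Rightarrow> complex^2^2 \<Rightarrow> complex^2^2 \<Rightarrow> bool" where
  "is_local_rep S R G1 G2 = (invertible S \<and> invertible R \<and> invertible G1 \<and> invertible G2 \<and>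
      TVB2_relations (local_rep S R G1 G2))"

fun rep_equiv :: "rep3 \<Rightarrow> rep3 \<Rightarrow> bool" where
  "rep_equiv (Zs, Zr, Zg1, Zg2) (Ws, Wr, Wg1, Wg2) = (\<exists>P :: complex^3^3. invertible P \<and>
     (
        P ** Zs ** matrix_inv P = Ws \<and> P ** Zr ** matrix_inv P = Wr \<and>
        P ** Zg1 ** matrix_inv P = Wg1 \<and> P ** Zg2 ** matrix_inv P = Wg2))"

definition I3 :: "complex^3^3" where "I3 = mat 1"

definition zeta1 :: "complex \<Rightarrow> complex \<Rightarrow> complex \<Rightarrow> rep3" where
  "zeta1 b d x = (dsum_l (mat2 d b (b / x^2) d), dsum_l (mat2 0 x (1 / x) 0),
                  diag3 (-1) 1 1, diag3 1 (-1) 1)"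

definition zeta2 :: "complex \<Rightarrow> complex \<Rightarrow> complex \<Rightarrow> complex \<Rightarrow> rep3" where
  "zeta2 b d w x = (dsum_l (mat2 ((2*b*w + d*x) / x) b ((b - b*w^2) / x^2) d),
                    dsum_l (mat2 w x ((1 - w^2) / x) (-w)), I3, I3)"

definition zeta3 :: "complex \<Rightarrow> complex \<Rightarrow> complex \<Rightarrow> complex \<Rightarrow> rep3" where
  "zeta3 a b c d = (dsum_l (mat2 a b c d), diag3 (-1) (-1) 1, I3, I3)"

definition zeta4 :: "complex \<Rightarrow> complex \<Rightarrow> complex \<Rightarrow> complex \<Rightarrow> rep3" where
  "zeta4 a b c d = (dsum_l (mat2 a b c d), I3, I3, I3)"

definition zeta5 :: "complex \<Rightarrow> complex \<Rightarrow> complex \<Rightarrow> rep3" where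
  "zeta5 a c d = (dsum_l (mat2 a 0 c d), dsum_l (mat2 (-1) 0 (2*c / (d - a)) 1), I3, I3)"

definition zeta6 :: "complex \<Rightarrow> complex \<Rightarrow> complex \<Rightarrow> rep3" where
  "zeta6 a c d = (dsum_l (mat2 a 0 c d), dsum_l (mat2 1 0 (2*c / (a - d)) (-1)), I3, I3)"

definition zeta7 :: "complex \<Rightarrow> complex \<Rightarrow> rep3" where
  "zeta7 d y = (diag3 d d 1, dsum_l (mat2 1 0 y (-1)), I3, I3)"

definition zeta8 :: "complex \<Rightarrow> complex \<Rightarrow> rep3" where
  "zeta8 d y = (diag3 d d 1, dsum_l (mat2 (-1) 0 y 1), I3, I3)"

end

theory Submission
  imports Defs
begin

text \<open>
  Since gamma_1 and gamma_2 commute while G \<oplus> 1 and 1 \<oplus> G overlap in the middle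
  coordinate, G is diagonal; the relation rho_1 gamma_1 = gamma_2 rho_1 then forces G = diag(g, 1)
  with g = \<plusminus>1, and kills the diagonal of R when g = -1. The product gamma_2 gamma_1 acts as the
  scalar g on the first two coordinates, so the last relation reduces to R S R = S: R is an
  involution commuting with S. Solving for the entries gives zeta_1 when g = -1, zeta_2 when
  R has a nonzero (1,2) entry, and otherwise R is a lower triangular involution, which leads to
  zeta_3, ..., zeta_8. In every case the representation is literally equal to a member of the
  family, so the conjugating matrix is the identity.
\<close>

lemma mat2_nth [simp]:
  "mat2 a b c d $ 1 $ 1 = a" "mat2 a b c d $ 1 $ 2 = b"
  "mat2 a b c d $ 2 $ 1 = c" "mat2 a b c d $ 2 $ 2 = d"
  by (simp_all add: mat2_def)

lemma mat3_nth [simp]: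
  "mat3 a11 a12 a13 a21 a22 a23 a31 a32 a33 $ 1 $ 1 = a11"
  "mat3 a11 a12 a13 a21 a22 a23 a31 a32 a33 $ 1 $ 2 = a12"
  "mat3 a11 a12 a13 a21 a22 a23 a31 a32 a33 $ 1 $ 3 = a13"
  "mat3 a11 a12 a13 a21 a22 a23 a31 a32 a33 $ 2 $ 1 = a21"
  "mat3 a11 a12 a13 a21 a22 a23 a31 a32 a33 $ 2 $ 2 = a22"
  "mat3 a11 a12 a13 a21 a22 a23 a31 a32 a33 $ 2 $ 3 = a23"
  "mat3 a11 a12 a13 a21 a22 a23 a31 a32 a33 $ 3 $ 1 = a31"
  "mat3 a11 a12 a13 a21 a22 a23 a31 a32 a33 $ 3 $ 2 = a32"
  "mat3 a11 a12 a13 a21 a22 a23 a31 a32 a33 $ 3 $ 3 = a33"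
  by (simp_all add: mat3_def)

lemma mat2_entries: "M = mat2 (M$1$1) (M$1$2) (M$2$1) (M$2$2)"
  by (simp add: vec_eq_iff forall_2)

lemma mat2_eq_iff: "mat2 a b c d = mat2 a' b' c' d' \<longleftrightarrow> a = a' \<and> b = b' \<and> c = c' \<and> d = d'"
  by (metis mat2_nth)

lemma mat3_eq_iff:
  "mat3 a11 a12 a13 a21 a22 a23 a31 a32 a33 = mat3 b11 b12 b13 b21 b22 b23 b31 b32 b33 \<longleftrightarrow>
     a11 = b11 \<and> a12 = b12 \<and> a13 = b13 \<and> a21 = b21 \<and> a22 = b22 \<and> a23 = b23 \<and>
     a31 = b31 \<and> a32 = b32 \<and> a33 = b33"
  by (metis mat3_nth)

lemma mat2_mult:
  "mat2 a b c d ** mat2 a' b' c' d' =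
     mat2 (a*a' + b*c') (a*b' + b*d') (c*a' + d*c') (c*b' + d*d')"
  by (simp add: vec_eq_iff forall_2 matrix_matrix_mult_def sum_2)

lemma mat3_mult:
  "mat3 a11 a12 a13 a21 a22 a23 a31 a32 a33 ** mat3 b11 b12 b13 b21 b22 b23 b31 b32 b33 =
     mat3 (a11*b11 + a12*b21 + a13*b31) (a11*b12 + a12*b22 + a13*b32) (a11*b13 + a12*b23 + a13*b33)
          (a21*b11 + a22*b21 + a23*b31) (a21*b12 + a22*b22 + a23*b32) (a21*b13 + a22*b23 + a23*b33)
          (a31*b11 + a32*b21 + a33*b31) (a31*b12 + a32*b22 + a33*b32) (a31*b13 + a32*b23 + a33*b33)"
  by (simp add: vec_eq_iff forall_3 matrix_matrix_mult_def sum_3)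

lemma mat2_one: "mat 1 = mat2 1 0 0 1"
  by (simp add: vec_eq_iff forall_2 mat_def)

lemma mat3_one: "mat 1 = mat3 1 0 0  0 1 0  0 0 1"
  by (simp add: vec_eq_iff forall_3 mat_def)

lemma invertible_mat2_iff: "invertible (mat2 a b c d) \<longleftrightarrow> a*d - b*c \<noteq> 0"
  by (simp add: invertible_det_nz det_2)

lemma dsum_l_mat2 [simp]: "dsum_l (mat2 a b c d) = mat3 a b 0  c d 0  0 0 1"
  by (simp add: dsum_l_def)

lemma dsum_r_mat2 [simp]: "dsum_r (mat2 a b c d) = mat3 1 0 0  0 a b  0 c d"
  by (simp add: dsum_r_def)

lemma dsum_l_mult: "dsum_l A ** dsum_l B = dsum_l (A ** B)"
  unfolding dsum_l_def mat3_mult mat3_eq_iff by (simp add: matrix_matrix_mult_def sum_2)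

lemma dsum_l_inject: "dsum_l A = dsum_l B \<longleftrightarrow> A = B"
  unfolding dsum_l_def mat3_eq_iff by (simp add: vec_eq_iff forall_2)

lemma dsum_l_one: "dsum_l (mat 1) = mat 1"
  by (simp add: mat2_one mat3_one)

lemma matrix_inv_mat_1: "matrix_inv (mat 1 :: 'a::semiring_1^'n^'n) = mat 1"
proof -
  have "mat 1 ** matrix_inv (mat 1 :: 'a^'n^'n) = mat 1"
    unfolding matrix_inv_def by (rule someI2[of _ "mat 1"]) auto
  then show ?thesis
    by simp
qed

lemma rep_equiv_refl: "rep_equiv Z Z"
  by (cases Z) (auto intro!: exI[of _ "mat 1"] simp: matrix_inv_mat_1 invertible_def)

lemma homogeneous_local_rep_gamma:
  assumes "is_local_rep S R G G"
  obtains g where "G = mat2 g 0 0 1" "g = 1 \<or> g = -1"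
proof -
  obtain a b c d where G: "G = mat2 a b c d"
    by (metis mat2_entries)
  have comm: "dsum_l G ** dsum_r G = dsum_r G ** dsum_l G"
    and square: "dsum_l G ** dsum_l G = mat 1"
    and rho: "dsum_l R ** dsum_l G = dsum_r G ** dsum_l R"
    using assms by (simp_all add: is_local_rep_def local_rep_def)
  from comm have "b = 0" "c = 0"
    by (simp_all add: G mat3_mult mat3_eq_iff)
  moreover from rho have "d = 1"
    by (simp add: G dsum_l_def mat3_mult mat3_eq_iff)
  moreover from square \<open>b = 0\<close> have "a * a = 1"
    by (simp add: G mat3_mult mat3_one mat3_eq_iff)
  ultimately show ?thesis
    using that G square_eq_1_iff by blast
qed

lemma homogeneous_local_rep_relations:
  assumes rep: "is_local_rep S R (mat2 g 0 0 1) (mat2 g 0 0 1)" and g: "g = 1 \<or> g = -1"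
  shows "invertible S" "R ** R = mat 1" "R ** S = S ** R"
    and "g = -1 \<Longrightarrow> R$1$1 = 0" "g = -1 \<Longrightarrow> R$2$2 = 0"
proof -
  let ?G = "mat2 g 0 0 1"
  have rho_square: "dsum_l R ** dsum_l R = mat 1"
    and rho_gamma: "dsum_l R ** dsum_l ?G = dsum_r ?G ** dsum_l R"
    and rho_sigma: "dsum_l R ** dsum_l S ** dsum_l R =
                    dsum_r ?G ** dsum_l ?G ** dsum_l S ** dsum_l ?G ** dsum_r ?G"
    using rep by (simp_all add: is_local_rep_def local_rep_def)
  show "invertible S"
    using rep by (simp add: is_local_rep_def)
  show R2: "R ** R = mat 1"
    using rho_square by (metis dsum_l_mult dsum_l_one dsum_l_inject)
  show "g = -1 \<Longrightarrow> R$1$1 = 0" "g = -1 \<Longrightarrow> R$2$2 = 0"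
    using rho_gamma by (simp_all add: dsum_l_def mat3_mult mat3_eq_iff)
  have "dsum_r ?G ** dsum_l ?G ** dsum_l S ** dsum_l ?G ** dsum_r ?G = dsum_l S"
    using g by (elim disjE) (simp_all add: dsum_l_def mat3_mult mat3_eq_iff)
  with rho_sigma have RSR: "R ** S ** R = S"
    by (simp add: dsum_l_mult dsum_l_inject)
  have "R ** S = R ** S ** (R ** R)"
    using R2 by simp
  also have "\<dots> = (R ** S ** R) ** R"
    by (simp add: matrix_mul_assoc)
  finally show "R ** S = S ** R"
    using RSR by simp
qed

lemma local_rep_eq_zeta1:
  assumes "invertible S" "R ** R = mat 1" "R ** S = S ** R" "R$1$1 = 0" "R$2$2 = 0"
  shows "\<exists>b d x. b^2 - d^2 * x^2 \<noteq> 0 \<and> x \<noteq> 0 \<and>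
           local_rep S R (mat2 (-1) 0 0 1) (mat2 (-1) 0 0 1) = zeta1 b d x"
proof -
  obtain x y where R: "R = mat2 0 x y 0"
    using assms(4,5) by (metis mat2_entries)
  obtain a b c d where S: "S = mat2 a b c d"
    by (metis mat2_entries)
  have "x * y = 1" "y * x = 1"
    using assms(2) by (simp_all add: R mat2_mult mat2_one mat2_eq_iff)
  then have x: "x \<noteq> 0" and y: "y = 1 / x"
    by (auto simp: eq_divide_eq)
  have "x * c = b * y" "x * d = a * x"
    using assms(3) by (simp_all add: R S mat2_mult mat2_eq_iff)
  then have c: "c = b / x^2" and d: "d = a"
    using x y by (simp add: field_simps power2_eq_square, metis mult.commute mult_cancel_left)
  have "a * a - b * c \<noteq> 0"
    using assms(1) by (simp add: S d invertible_mat2_iff)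
  then have "b^2 - a^2 * x^2 \<noteq> 0"
    using x by (simp add: c field_simps power2_eq_square)
  moreover have "local_rep S R (mat2 (-1) 0 0 1) (mat2 (-1) 0 0 1) = zeta1 b a x"
    by (simp add: local_rep_def zeta1_def R S y c d diag3_def)
  ultimately show ?thesis
    using x by blast
qed

lemma local_rep_eq_zeta2:
  assumes "invertible S" "R ** R = mat 1" "R ** S = S ** R" "R$1$2 \<noteq> 0"
  shows "\<exists>b d w x. x \<noteq> 0 \<and> d*x + b*w \<noteq> b \<and> d*x + b*w \<noteq> -b \<and>
           local_rep S R (mat2 1 0 0 1) (mat2 1 0 0 1) = zeta2 b d w x"
proof -
  obtain w x z v where R: "R = mat2 w x z v" and x: "x \<noteq> 0"
    using assms(4) by (metis mat2_entries mat2_nth(2))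
  obtain a b c d where S: "S = mat2 a b c d"
    by (metis mat2_entries)
  have wz: "w * w + x * z = 1" and "w * x + x * v = 0"
    using assms(2) by (simp_all add: R mat2_mult mat2_one mat2_eq_iff)
  then have v: "v = - w"
    using x by algebra
  have z: "z = (1 - w^2) / x"
    using wz x by (simp add: field_simps power2_eq_square)
  have xc: "x * c = b * z" and ax: "2 * (b * w) + x * d = a * x"
    using assms(3) by (simp_all add: R S v mat2_mult mat2_eq_iff)
  have cx: "c * x^2 = b - b * w^2"
    using xc wz by algebra
  have a: "a = (2 * b * w + d * x) / x" and c: "c = (b - b * w^2) / x^2"
    using ax cx x by (simp_all add: field_simps)
  have "a * d - b * c \<noteq> 0"
    using assms(1) by (simp add: S invertible_mat2_iff)
  moreover have "x^2 * (a * d - b * c) = (d*x + b*w - b) * (d*x + b*w + b)"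
    using ax cx by algebra
  ultimately have "d*x + b*w \<noteq> b" "d*x + b*w \<noteq> -b"
    using x by auto
  moreover have "local_rep S R (mat2 1 0 0 1) (mat2 1 0 0 1) = zeta2 b d w x"
    by (simp add: local_rep_def zeta2_def R S v z a c I3_def mat3_one)
  ultimately show ?thesis
    using x by blast
qed

lemma lower_triangular_involution_cases:
  assumes "R ** R = mat 1" "R$1$2 = 0"
  obtains "R = mat2 1 0 0 1" | "R = mat2 (-1) 0 0 (-1)"
    | y where "R = mat2 1 0 y (-1)" | y where "R = mat2 (-1) 0 y 1"
proof -
  obtain e y f where R: "R = mat2 e 0 y f"
    using assms(2) by (metis mat2_entries)
  have "e * e = 1" "f * f = 1" "y * (e + f) = 0"
    using assms(1) by (simp_all add: R mat2_mult mat2_one mat2_eq_iff algebra_simps)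
  then show ?thesis
    using that R by (auto simp: square_eq_1_iff)
qed

lemma local_rep_eq_zeta6_or_zeta7:
  assumes "invertible S" "R = mat2 1 0 y (-1)" "R ** S = S ** R"
  shows "(\<exists>a c d. a*d \<noteq> 0 \<and> a \<noteq> d \<and> local_rep S R (mat2 1 0 0 1) (mat2 1 0 0 1) = zeta6 a c d)
       \<or> (\<exists>d y. d \<noteq> 0 \<and> local_rep S R (mat2 1 0 0 1) (mat2 1 0 0 1) = zeta7 d y)"
proof -
  obtain a b c d where S: "S = mat2 a b c d"
    by (metis mat2_entries)
  have b: "b = 0" and c: "2 * c = y * (a - d)"
    using assms(3) by (simp_all add: assms(2) S mat2_mult mat2_eq_iff algebra_simps)
  have "a * d \<noteq> 0"
    using assms(1) by (simp add: S b invertible_mat2_iff)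
  show ?thesis
  proof (cases "a = d")
    case True
    then have "local_rep S R (mat2 1 0 0 1) (mat2 1 0 0 1) = zeta7 a y"
      using c by (simp add: local_rep_def zeta7_def assms(2) S b diag3_def I3_def mat3_one)
    then show ?thesis
      using \<open>a * d \<noteq> 0\<close> by auto
  next
    case False
    then have "y = 2 * c / (a - d)"
      using c by (simp add: field_simps)
    then have "local_rep S R (mat2 1 0 0 1) (mat2 1 0 0 1) = zeta6 a c d"
      by (simp add: local_rep_def zeta6_def assms(2) S b I3_def mat3_one)
    then show ?thesis
      using \<open>a * d \<noteq> 0\<close> False by blast
  qed
qed

lemma local_rep_eq_zeta5_or_zeta8:
  assumes "invertible S" "R = mat2 (-1) 0 y 1" "R ** S = S ** R"
  shows "(\<exists>a c d. a*d \<noteq> 0 \<and> a \<noteq> d \<and> local_rep S R (mat2 1 0 0 1) (mat2 1 0 0 1) = zeta5 a c d)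
       \<or> (\<exists>d y. d \<noteq> 0 \<and> local_rep S R (mat2 1 0 0 1) (mat2 1 0 0 1) = zeta8 d y)"
proof -
  obtain a b c d where S: "S = mat2 a b c d"
    by (metis mat2_entries)
  have b: "b = 0" and c: "2 * c = y * (d - a)"
    using assms(3) by (simp_all add: assms(2) S mat2_mult mat2_eq_iff algebra_simps)
  have "a * d \<noteq> 0"
    using assms(1) by (simp add: S b invertible_mat2_iff)
  show ?thesis
  proof (cases "a = d")
    case True
    then have "local_rep S R (mat2 1 0 0 1) (mat2 1 0 0 1) = zeta8 a y"
      using c by (simp add: local_rep_def zeta8_def assms(2) S b diag3_def I3_def mat3_one)
    then show ?thesis
      using \<open>a * d \<noteq> 0\<close> by auto
  next
    case False
    then have "y = 2 * c / (d - a)"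
      using c by (simp add: field_simps)
    then have "local_rep S R (mat2 1 0 0 1) (mat2 1 0 0 1) = zeta5 a c d"
      by (simp add: local_rep_def zeta5_def assms(2) S b I3_def mat3_one)
    then show ?thesis
      using \<open>a * d \<noteq> 0\<close> False by blast
  qed
qed

lemma local_rep_eq_zeta3:
  assumes "invertible S" "R = mat2 (-1) 0 0 (-1)"
  shows "\<exists>a b c d. a*d - b*c \<noteq> 0 \<and> local_rep S R (mat2 1 0 0 1) (mat2 1 0 0 1) = zeta3 a b c d"
proof -
  obtain a b c d where S: "S = mat2 a b c d"
    by (metis mat2_entries)
  have "local_rep S R (mat2 1 0 0 1) (mat2 1 0 0 1) = zeta3 a b c d"
    by (simp add: local_rep_def zeta3_def assms(2) S diag3_def I3_def mat3_one)
  moreover have "a*d - b*c \<noteq> 0"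
    using assms(1) by (simp add: S invertible_mat2_iff)
  ultimately show ?thesis
    by blast
qed

lemma local_rep_eq_zeta4:
  assumes "invertible S" "R = mat2 1 0 0 1"
  shows "\<exists>a b c d. a*d - b*c \<noteq> 0 \<and> local_rep S R (mat2 1 0 0 1) (mat2 1 0 0 1) = zeta4 a b c d"
proof -
  obtain a b c d where S: "S = mat2 a b c d"
    by (metis mat2_entries)
  have "local_rep S R (mat2 1 0 0 1) (mat2 1 0 0 1) = zeta4 a b c d"
    by (simp add: local_rep_def zeta4_def assms(2) S I3_def mat3_one)
  moreover have "a*d - b*c \<noteq> 0"
    using assms(1) by (simp add: S invertible_mat2_iff)
  ultimately show ?thesis
    by blast
qed

lemma local_rep_eq_zeta3_to_zeta8:
  assumes "invertible S" "R ** R = mat 1" "R ** S = S ** R" "R$1$2 = 0"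
  shows "(\<exists>a b c d. a*d - b*c \<noteq> 0 \<and> local_rep S R (mat2 1 0 0 1) (mat2 1 0 0 1) = zeta3 a b c d)
       \<or> (\<exists>a b c d. a*d - b*c \<noteq> 0 \<and> local_rep S R (mat2 1 0 0 1) (mat2 1 0 0 1) = zeta4 a b c d)
       \<or> (\<exists>a c d. a*d \<noteq> 0 \<and> a \<noteq> d \<and> local_rep S R (mat2 1 0 0 1) (mat2 1 0 0 1) = zeta5 a c d)
       \<or> (\<exists>a c d. a*d \<noteq> 0 \<and> a \<noteq> d \<and> local_rep S R (mat2 1 0 0 1) (mat2 1 0 0 1) = zeta6 a c d)
       \<or> (\<exists>d y. d \<noteq> 0 \<and> local_rep S R (mat2 1 0 0 1) (mat2 1 0 0 1) = zeta7 d y)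
       \<or> (\<exists>d y. d \<noteq> 0 \<and> local_rep S R (mat2 1 0 0 1) (mat2 1 0 0 1) = zeta8 d y)"
  using assms(2,4)
proof (cases rule: lower_triangular_involution_cases)
  case 1
  then show ?thesis
    using local_rep_eq_zeta4[OF assms(1)] by metis
next
  case 2
  then show ?thesis
    using local_rep_eq_zeta3[OF assms(1)] by metis
next
  case (3 y)
  then show ?thesis
    using local_rep_eq_zeta6_or_zeta7[OF assms(1) 3 assms(3)] by metis
next
  case (4 y)
  then show ?thesis
    using local_rep_eq_zeta5_or_zeta8[OF assms(1) 4 assms(3)] by metis
qed

theorem theorem3p1:
  fixes S R G :: "complex^2^2"
  assumes "is_local_rep S R G G"
  shows "(\<exists>b d x. b^2 - d^2 * x^2 \<noteq> 0 \<and> x \<noteq> 0 \<and>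
            rep_equiv (local_rep S R G G) (zeta1 b d x))
       \<or> (\<exists>b d w x. x \<noteq> 0 \<and> d*x + b*w \<noteq> b \<and> d*x + b*w \<noteq> -b \<and>
            rep_equiv (local_rep S R G G) (zeta2 b d w x))
       \<or> (\<exists>a b c d. a*d - b*c \<noteq> 0 \<and> rep_equiv (local_rep S R G G) (zeta3 a b c d))
       \<or> (\<exists>a b c d. a*d - b*c \<noteq> 0 \<and> rep_equiv (local_rep S R G G) (zeta4 a b c d))
       \<or> (\<exists>a c d. a*d \<noteq> 0 \<and> a \<noteq> d \<and> rep_equiv (local_rep S R G G) (zeta5 a c d))
       \<or> (\<exists>a c d. a*d \<noteq> 0 \<and> a \<noteq> d \<and> rep_equiv (local_rep S R G G) (zeta6 a c d))
       \<or> (\<exists>d y. d \<noteq> 0 \<and> rep_equiv (local_rep S R G G) (zeta7 d y))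
       \<or> (\<exists>d y. d \<noteq> 0 \<and> rep_equiv (local_rep S R G G) (zeta8 d y))"
proof -
  obtain g where G: "G = mat2 g 0 0 1" and g: "g = 1 \<or> g = -1"
    using assms by (rule homogeneous_local_rep_gamma)
  note rels = homogeneous_local_rep_relations[OF assms[unfolded G] g]
  consider (antidiagonal) "g = -1" | (generic) "g = 1" "R$1$2 \<noteq> 0"
    | (triangular) "g = 1" "R$1$2 = 0"
    using g by blast
  then show ?thesis
  proof cases
    case antidiagonal
    then show ?thesis
      using local_rep_eq_zeta1[OF rels(1-3) rels(4-5)[OF antidiagonal]]
      unfolding G by (metis rep_equiv_refl)
  next
    case generic
    then show ?thesis
      using local_rep_eq_zeta2[OF rels(1-3) generic(2)]
      unfolding G by (metis rep_equiv_refl)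
  next
    case triangular
    then show ?thesis
      using local_rep_eq_zeta3_to_zeta8[OF rels(1-3) triangular(2)]
      unfolding G by (elim disjE; metis rep_equiv_refl)
  qed
qed

end
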